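(* Let $V$ be a finite set, $\mu\colon\binom V2\to\mathbb{Z}_+$, $e=\{v_1,v_2\}\in\binom V2$, $r=\mu(e)$, and let $\mu_1\colon\binom V2\to\mathbb{Z}_+$ agree with $\mu$ except that $\mu_1(e)=1$. Then \[ n(\mu,V)=r\,n(\mu_1,V)+(r-1)\big[n(\mu,V\setminus\{v_1\})+n(\mu,V\setminus\{v_2\})+n(\mu,V\setminus\{v_1,v_2\})\big], \] where $n(\mu,W)$ for $W\subseteq V$ means $n$ of the restriction of $\mu$ to $\binom W2$.
   Context: For a finite set $W$ with $|W|=m$ and $\mu\colon\binom W2\to\mathbb{Z}_+$, $n(\mu,W)=\sum_{J\subseteq W,|J|\geqslant2}(-1)^{m-|J|}\prod_{e\in\binom J2}\mu(e)+(-1)^{m-1}(m-1)$. (This is the number of $(m-1)$-spheres in the wedge to which the edge inflation $(\Delta_W)_\mu$ of the full simplex on $W$ is homotopy equivalent; e.g. $n(\mu,\varnothing)=1$.) *)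

theory Defs
  imports Main
begin

definition two_subsets :: "'a set \<Rightarrow> 'a set set" where
  "two_subsets W = {e. e \<subseteq> W \<and> card e = 2}"

text \<open>The sign (-1)^(m-1) is written as (-1)^(m+1)
  to avoid natural-number truncation at m = 0 (same parity); similarly
  (-1)^(m-|J|) with |J| <= m.\<close>
definition nmu :: "('a set \<Rightarrow> int) \<Rightarrow> 'a set \<Rightarrow> int" where
  "nmu \<mu> W = (\<Sum>J \<in> {J. J \<subseteq> W \<and> card J \<ge> 2}.
       (-1) ^ (card W - card J) * (\<Prod>e \<in> two_subsets J. \<mu> e))
     + (-1) ^ (card W + 1) * (int (card W) - 1)"

end

theory Submission
  imports Defs
begin

text \<open>Split the subsets \<open>J \<subseteq> V\<close> according to whether they contain the edge \<open>e = {v1, v2}\<close>.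
  If they do, the edge factor contributes \<open>r\<close> to \<open>\<mu>\<close> and \<open>1\<close> to \<open>\<mu>1\<close>, so these terms of
  \<open>n(\<mu>, V)\<close> are exactly \<open>r\<close> times those of \<open>n(\<mu>1, V)\<close>; if they do not, \<open>\<mu>\<close> and \<open>\<mu>1\<close> agree.
  Hence \<open>n(\<mu>, V) - r n(\<mu>1, V)\<close> is \<open>(1 - r)\<close> times the sum over subsets avoiding \<open>e\<close>, which by
  inclusion-exclusion over \<open>V - {v1}\<close>, \<open>V - {v2}\<close>, \<open>V - {v1, v2}\<close> is minus the sum of the three
  smaller invariants; the constant terms \<open>(-1)^(m-1)(m-1)\<close> match up in the same way.\<close>

definition nmu_sum :: "('a set \<Rightarrow> int) \<Rightarrow> 'a set \<Rightarrow> int" where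
  "nmu_sum \<mu> W = (\<Sum>J \<in> {J. J \<subseteq> W \<and> card J \<ge> 2}.
       (-1) ^ (card W - card J) * (\<Prod>e \<in> two_subsets J. \<mu> e))"

lemma nmu_eq_nmu_sum: "nmu \<mu> W = nmu_sum \<mu> W + (-1) ^ (card W + 1) * (int (card W) - 1)"
  unfolding nmu_def nmu_sum_def ..

lemma finite_two_subsets: "finite J \<Longrightarrow> finite (two_subsets J)"
  unfolding two_subsets_def by (auto intro: finite_subset[of _ "Pow J"])

lemma prod_two_subsets_reset_edge:
  assumes "finite J" "v1 \<in> J" "v2 \<in> J" "v1 \<noteq> v2"
    and "\<forall>e \<in> two_subsets J. e \<noteq> {v1, v2} \<longrightarrow> \<mu>1 e = \<mu> e"
    and "\<mu>1 {v1, v2} = 1"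
  shows "(\<Prod>e \<in> two_subsets J. \<mu> e) = \<mu> {v1, v2} * (\<Prod>e \<in> two_subsets J. \<mu>1 e)"
proof -
  have edge: "{v1, v2} \<in> two_subsets J"
    using assms(2-4) unfolding two_subsets_def by auto
  have "(\<Prod>e \<in> two_subsets J - {{v1, v2}}. \<mu> e) = (\<Prod>e \<in> two_subsets J - {{v1, v2}}. \<mu>1 e)"
    using assms(5) by (intro prod.cong) auto
  with prod.remove[OF finite_two_subsets[OF assms(1)] edge] show ?thesis
    by (metis assms(6) mult_1)
qed

lemma nmu_sum_reset_edge:
  assumes "finite V" "v1 \<noteq> v2"
    and "\<forall>e \<in> two_subsets V. e \<noteq> {v1, v2} \<longrightarrow> \<mu>1 e = \<mu> e"
    and "\<mu>1 {v1, v2} = 1"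
  shows "nmu_sum \<mu> V = \<mu> {v1, v2} * nmu_sum \<mu>1 V + (1 - \<mu> {v1, v2}) *
    (\<Sum>J \<in> {J. J \<subseteq> V \<and> card J \<ge> 2 \<and> \<not> (v1 \<in> J \<and> v2 \<in> J)}.
       (-1) ^ (card V - card J) * (\<Prod>e \<in> two_subsets J. \<mu> e))"
proof -
  define s where "s J = (-1::int) ^ (card V - card J)" for J :: "'a set"
  define P where "P f J = (\<Prod>e \<in> two_subsets J. f e)" for f :: "'a set \<Rightarrow> int" and J
  define A where "A = {J. J \<subseteq> V \<and> card J \<ge> 2 \<and> v1 \<in> J \<and> v2 \<in> J}"
  define B where "B = {J. J \<subseteq> V \<and> card J \<ge> 2 \<and> \<not> (v1 \<in> J \<and> v2 \<in> J)}"
  have split: "nmu_sum f V = (\<Sum>J\<in>A. s J * P f J) + (\<Sum>J\<in>B. s J * P f J)" for f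
  proof -
    have "{J. J \<subseteq> V \<and> card J \<ge> 2} = A \<union> B" "A \<inter> B = {}"
      unfolding A_def B_def by auto
    moreover have "finite A" "finite B"
      using assms(1) unfolding A_def B_def by (auto intro: finite_subset[of _ "Pow V"])
    ultimately show ?thesis
      unfolding nmu_sum_def s_def P_def by (simp add: sum.union_disjoint)
  qed
  have "P \<mu> J = \<mu> {v1, v2} * P \<mu>1 J" if "J \<in> A" for J
  proof -
    have "J \<subseteq> V" "v1 \<in> J" "v2 \<in> J"
      using that unfolding A_def by auto
    moreover have "two_subsets J \<subseteq> two_subsets V"
      using \<open>J \<subseteq> V\<close> unfolding two_subsets_def by auto
    ultimately show ?thesis
      unfolding P_def using assms finite_subset
      by (intro prod_two_subsets_reset_edge) auto
  qed
  then have on_A: "(\<Sum>J\<in>A. s J * P \<mu> J) = \<mu> {v1, v2} * (\<Sum>J\<in>A. s J * P \<mu>1 J)"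
    by (simp add: sum_distrib_left algebra_simps)
  have "P \<mu>1 J = P \<mu> J" if "J \<in> B" for J
    using that assms(3) unfolding B_def P_def
    by (intro prod.cong) (auto simp: two_subsets_def)
  then have on_B: "(\<Sum>J\<in>B. s J * P \<mu>1 J) = (\<Sum>J\<in>B. s J * P \<mu> J)"
    by simp
  show ?thesis
    unfolding split on_A on_B by (simp add: B_def s_def P_def algebra_simps)
qed

lemma sum_subsets_avoiding_pair:
  fixes g :: "'a set \<Rightarrow> 'b::ab_group_add"
  assumes "finite V"
  shows "(\<Sum>J \<in> {J. J \<subseteq> V \<and> Q J \<and> \<not> (a \<in> J \<and> b \<in> J)}. g J)
    = (\<Sum>J \<in> {J. J \<subseteq> V - {a} \<and> Q J}. g J) + (\<Sum>J \<in> {J. J \<subseteq> V - {b} \<and> Q J}. g J)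
      - (\<Sum>J \<in> {J. J \<subseteq> V - {a, b} \<and> Q J}. g J)"
proof -
  have "{J. J \<subseteq> V \<and> Q J \<and> \<not> (a \<in> J \<and> b \<in> J)}
      = {J. J \<subseteq> V - {a} \<and> Q J} \<union> {J. J \<subseteq> V - {b} \<and> Q J}"
       "{J. J \<subseteq> V - {a} \<and> Q J} \<inter> {J. J \<subseteq> V - {b} \<and> Q J} = {J. J \<subseteq> V - {a, b} \<and> Q J}"
    by auto
  moreover have "finite {J. J \<subseteq> V - {c} \<and> Q J}" for c
    using assms by (auto intro: finite_subset[of _ "Pow V"])
  ultimately show ?thesis
    using sum.union_inter[of "{J. J \<subseteq> V - {a} \<and> Q J}" "{J. J \<subseteq> V - {b} \<and> Q J}" g]
    by (simp add: algebra_simps)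
qed

lemma nmu_sum_sign_shift:
  assumes "finite W" "U \<subseteq> W"
  shows "(\<Sum>J \<in> {J. J \<subseteq> U \<and> card J \<ge> 2}. (-1) ^ (card W - card J) * (\<Prod>e \<in> two_subsets J. \<mu> e))
    = (-1) ^ (card W - card U) * nmu_sum \<mu> U"
  unfolding nmu_sum_def sum_distrib_left
proof (rule sum.cong)
  fix J assume "J \<in> {J. J \<subseteq> U \<and> card J \<ge> 2}"
  then have "card J \<le> card U" "card U \<le> card W"
    using assms by (auto intro: card_mono finite_subset)
  then have "card W - card J = (card W - card U) + (card U - card J)"
    by simp
  then show "(-1) ^ (card W - card J) * (\<Prod>e \<in> two_subsets J. \<mu> e)
    = (-1) ^ (card W - card U) * ((-1) ^ (card U - card J) * (\<Prod>e \<in> two_subsets J. \<mu> e))"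
    by (simp add: power_add)
qed simp

lemma sum_subsets_avoiding_edge:
  assumes "finite V" "v1 \<in> V" "v2 \<in> V" "v1 \<noteq> v2"
  shows "(\<Sum>J \<in> {J. J \<subseteq> V \<and> card J \<ge> 2 \<and> \<not> (v1 \<in> J \<and> v2 \<in> J)}.
       (-1) ^ (card V - card J) * (\<Prod>e \<in> two_subsets J. \<mu> e))
    = - (nmu_sum \<mu> (V - {v1}) + nmu_sum \<mu> (V - {v2}) + nmu_sum \<mu> (V - {v1, v2}))"
proof -
  have one: "card V - card (V - {v}) = 1" if "v \<in> V" for v
    using assms(1) that card_Diff1_less[OF assms(1) that] by (simp add: card_Diff_singleton)
  have "card {v1, v2} \<le> card V"
    using assms by (intro card_mono) auto
  then have two: "card V - card (V - {v1, v2}) = 2"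
    using assms by (simp add: card_Diff_subset)
  note shifted = nmu_sum_sign_shift[OF assms(1) Diff_subset, where \<mu> = \<mu>]
  show ?thesis
    unfolding sum_subsets_avoiding_pair[OF assms(1), where Q = "\<lambda>J. card J \<ge> 2"]
      shifted one[OF assms(2)] one[OF assms(3)] two
    by simp
qed

theorem lemma4p4:
  fixes V :: "'a set" and \<mu> \<mu>1 :: "'a set \<Rightarrow> int" and v1 v2 :: 'a and r :: int
  assumes "finite V"
    and "\<forall>e \<in> two_subsets V. \<mu> e \<ge> 1"
    and "v1 \<in> V" and "v2 \<in> V" and "v1 \<noteq> v2"
    and "r = \<mu> {v1, v2}"
    and "\<forall>e \<in> two_subsets V. e \<noteq> {v1, v2} \<longrightarrow> \<mu>1 e = \<mu> e"
    and "\<mu>1 {v1, v2} = 1"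
  shows "nmu \<mu> V = r * nmu \<mu>1 V
           + (r - 1) * (nmu \<mu> (V - {v1}) + nmu \<mu> (V - {v2}) + nmu \<mu> (V - {v1, v2}))"
proof -
  have "card {v1, v2} \<le> card V"
    using assms by (intro card_mono) auto
  then obtain k where k: "card V = k + 2"
    using assms(5) by (metis card_2_iff le_add_diff_inverse2)
  have "card (V - {v1}) = k + 1" "card (V - {v2}) = k + 1" "card (V - {v1, v2}) = k"
    using assms(1,3-5) k by (simp_all add: card_Diff_subset)
  moreover have "nmu_sum \<mu> V = r * nmu_sum \<mu>1 V
      + (r - 1) * (nmu_sum \<mu> (V - {v1}) + nmu_sum \<mu> (V - {v2}) + nmu_sum \<mu> (V - {v1, v2}))"
    using nmu_sum_reset_edge[OF assms(1,5,7,8)]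
    unfolding sum_subsets_avoiding_edge[OF assms(1,3-5)] assms(6)
    by (simp add: algebra_simps)
  ultimately show ?thesis
    unfolding nmu_eq_nmu_sum k by (simp add: algebra_simps)
qed

end
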